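(* Fix an instance $(d,\mathcal{C},k)$ of $k$-center with $|\mathcal{C}|=n$, an optimal solution $F^*=\{o_1,\dots,o_k\}$ with balls $O_t=\{c\in\mathcal{C}: d(o_t,c)\le \mathrm{OPT}\}$, and an execution $F_0\supseteq F_1\supseteq\dots\supseteq F_{n-k}$ of the reverse greedy algorithm. If there exists $t$ such that $|O_t\cap F_{n-k}|\ge 2$, then $\Gamma(F_{c_{l+1}}) < \Gamma(F_{c_l})$ for every integer $l\ge 0$ such that both $c_l$ and $c_{l+1}$ are defined.
   Context: An instance of $k$-center consists of a finite metric space $(d,\mathcal{C})$ with $|\mathcal{C}|=n$ and an integer $k\le n$; every point is both a client and a potential facility. For nonempty $F\subseteq\mathcal{C}$, $d(c,F):=\min_{f\in F}d(c,f)$ and $\mathrm{cost}(F):=\max_{c\in\mathcal{C}}d(c,F)$; $\mathrm{OPT}$ is the minimum cost over sets of at most $k$ points, attained by $F^*$. Reverse greedy: $F_0:=\mathcal{C}$, and for $i=1,\dots,n-k$, $F_i:=F_{i-1}\setminus\{f_i\}$ where $f_i\in\arg\min_{f\in F_{i-1}}\mathrm{cost}(F_{i-1}\setminus\{f\})$ (ties arbitrary). For an integer $l\ge0$, $F_i$ is called $l$-critical if $\mathrm{cost}(F_i)\le 2l\cdot\mathrm{OPT}$ and $\mathrm{cost}(F_{i+1})>2l\cdot\mathrm{OPT}$ (with $0\le i< n-k$); $c_l$ denotes the index $i$ such that $F_i$ is $l$-critical, and $c_l$ is said to be defined if such an $i$ exists. A consolidation of $F\subseteq\mathcal{C}$ is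 a collection $\Phi=\{P_1,P_2,\dots\}$ of subsets $P_s\subseteq\mathcal{C}$ such that (1) $F\subseteq\bigcup_s P_s$; (2) $\max_{x,y\in P_s}d(x,y)\le 2\cdot\mathrm{OPT}$ for every $P_s$; (3) whenever $f,f'\in F\cap O_t$ for some $t$, there is some $P_s$ with $f,f'\in P_s$. The consolidation number $\Gamma(F)$ is the minimum cardinality of a consolidation of $F$. *)

theory Defs
  imports Complex_Main
begin

definition finite_metric :: "('a \<Rightarrow> 'a \<Rightarrow> real) \<Rightarrow> 'a set \<Rightarrow> bool" where
  "finite_metric d C \<longleftrightarrow> finite C \<and>
     (\<forall>x\<in>C. \<forall>y\<in>C. d x y \<ge> 0 \<and> d x y = d y x \<and> (d x y = 0 \<longleftrightarrow> x = y)) \<and>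
     (\<forall>x\<in>C. \<forall>y\<in>C. \<forall>z\<in>C. d x z \<le> d x y + d y z)"

definition dist_set :: "('a \<Rightarrow> 'a \<Rightarrow> real) \<Rightarrow> 'a \<Rightarrow> 'a set \<Rightarrow> real" where
  "dist_set d c F = Min ((\<lambda>f. d c f) ` F)"

definition cost :: "('a \<Rightarrow> 'a \<Rightarrow> real) \<Rightarrow> 'a set \<Rightarrow> 'a set \<Rightarrow> real" where
  "cost d C F = Max ((\<lambda>c. dist_set d c F) ` C)"

definition OPT :: "('a \<Rightarrow> 'a \<Rightarrow> real) \<Rightarrow> 'a set \<Rightarrow> nat \<Rightarrow> real" where
  "OPT d C k = Min {cost d C F | F. F \<subseteq> C \<and> F \<noteq> {} \<and> card F \<le> k}"

definition optimal_solution :: "('a \<Rightarrow> 'a \<Rightarrow> real) \<Rightarrow> 'a set \<Rightarrow> nat \<Rightarrow> 'a set \<Rightarrow> bool" where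
  "optimal_solution d C k Fs \<longleftrightarrow> Fs \<subseteq> C \<and> Fs \<noteq> {} \<and> card Fs \<le> k \<and> cost d C Fs = OPT d C k"

definition opt_ball :: "('a \<Rightarrow> 'a \<Rightarrow> real) \<Rightarrow> 'a set \<Rightarrow> nat \<Rightarrow> 'a \<Rightarrow> 'a set" where
  "opt_ball d C k oc = {c \<in> C. d oc c \<le> OPT d C k}"

definition reverse_greedy :: "('a \<Rightarrow> 'a \<Rightarrow> real) \<Rightarrow> 'a set \<Rightarrow> nat \<Rightarrow> (nat \<Rightarrow> 'a set) \<Rightarrow> bool" where
  "reverse_greedy d C k F \<longleftrightarrow> F 0 = C \<and>
     (\<forall>i\<in>{1..card C - k}. \<exists>f\<in>F (i - 1). F i = F (i - 1) - {f} \<and>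
        (\<forall>g\<in>F (i - 1). cost d C (F (i - 1) - {f}) \<le> cost d C (F (i - 1) - {g})))"

definition critical :: "('a \<Rightarrow> 'a \<Rightarrow> real) \<Rightarrow> 'a set \<Rightarrow> nat \<Rightarrow> (nat \<Rightarrow> 'a set) \<Rightarrow> nat \<Rightarrow> nat \<Rightarrow> bool" where
  "critical d C k F l i \<longleftrightarrow> i < card C - k \<and>
     cost d C (F i) \<le> 2 * real l * OPT d C k \<and> cost d C (F (Suc i)) > 2 * real l * OPT d C k"

definition consolidation :: "('a \<Rightarrow> 'a \<Rightarrow> real) \<Rightarrow> 'a set \<Rightarrow> nat \<Rightarrow> 'a set \<Rightarrow> 'a set \<Rightarrow> 'a set set \<Rightarrow> bool" where
  "consolidation d C k Fs F \<Phi> \<longleftrightarrow> finite \<Phi> \<and> (\<forall>P\<in>\<Phi>. P \<subseteq> C) \<and>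
     F \<subseteq> \<Union>\<Phi> \<and>
     (\<forall>P\<in>\<Phi>. \<forall>x\<in>P. \<forall>y\<in>P. d x y \<le> 2 * OPT d C k) \<and>
     (\<forall>oc\<in>Fs. \<forall>f\<in>F \<inter> opt_ball d C k oc. \<forall>f'\<in>F \<inter> opt_ball d C k oc. \<exists>P\<in>\<Phi>. f \<in> P \<and> f' \<in> P)"

definition consolidation_number :: "('a \<Rightarrow> 'a \<Rightarrow> real) \<Rightarrow> 'a set \<Rightarrow> nat \<Rightarrow> 'a set \<Rightarrow> 'a set \<Rightarrow> nat" where
  "consolidation_number d C k Fs F = (LEAST m. \<exists>\<Phi>. consolidation d C k Fs F \<Phi> \<and> card \<Phi> = m)"

end

theory Submission
  imports Defs
begin

text \<open>If F_i is l-critical and F_j is (l+1)-critical then i <= j, so two distinct points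
  f1, f2 of some optimal ball O_t survive in F_j. Greedy removes a cheapest point of F_j, hence
  removing f1 would cost more than 2(l+1) OPT: some client c is farther than that from every
  point of F_j - {f1}, while c is within 2l OPT of some g in F_i. In an optimal consolidation
  of F_i, the block P containing g has diameter at most 2 OPT, so it meets F_j at most in f1,
  and f1 also lies in the different block that joins f1 and f2. Dropping P therefore leaves a
  consolidation of F_j with one block fewer.\<close>

lemma finite_metric_finite: "finite_metric d C \<Longrightarrow> finite C"
  unfolding finite_metric_def by simp

lemma finite_metric_nonneg: "finite_metric d C \<Longrightarrow> x \<in> C \<Longrightarrow> y \<in> C \<Longrightarrow> 0 \<le> d x y"
  unfolding finite_metric_def by simp

lemma finite_metric_sym: "finite_metric d C \<Longrightarrow> x \<in> C \<Longrightarrow> y \<in> C \<Longrightarrow> d x y = d y x"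
  unfolding finite_metric_def by simp

lemma finite_metric_triangle:
  "finite_metric d C \<Longrightarrow> x \<in> C \<Longrightarrow> y \<in> C \<Longrightarrow> z \<in> C \<Longrightarrow> d x z \<le> d x y + d y z"
  unfolding finite_metric_def by simp

lemma dist_set_le:
  assumes "finite A" "g \<in> A"
  shows "dist_set d c A \<le> d c g"
  unfolding dist_set_def using assms by (intro Min_le) auto

lemma dist_set_attained:
  assumes "finite A" "A \<noteq> {}"
  shows "\<exists>g\<in>A. dist_set d c A = d c g"
proof -
  have "Min ((\<lambda>f. d c f) ` A) \<in> (\<lambda>f. d c f) ` A" using assms by (intro Min_in) auto
  then show ?thesis unfolding dist_set_def by auto
qed

lemma dist_set_le_cost:
  assumes "finite C" "c \<in> C"
  shows "dist_set d c F \<le> cost d C F"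
  unfolding cost_def using assms by (intro Max_ge) auto

lemma cost_attained:
  assumes "finite C" "C \<noteq> {}"
  shows "\<exists>c\<in>C. cost d C F = dist_set d c F"
proof -
  have "Max ((\<lambda>c. dist_set d c F) ` C) \<in> (\<lambda>c. dist_set d c F) ` C"
    using assms by (intro Max_in) auto
  then show ?thesis unfolding cost_def by auto
qed

lemma cost_antimono:
  assumes "finite C" "C \<noteq> {}" "finite B" "A \<subseteq> B" "A \<noteq> {}"
  shows "cost d C B \<le> cost d C A"
proof -
  obtain c where c: "c \<in> C" "cost d C B = dist_set d c B"
    using cost_attained[OF assms(1,2)] by blast
  obtain g where g: "g \<in> A" "dist_set d c A = d c g"
    using dist_set_attained[OF finite_subset[OF assms(4,3)] assms(5)] by blast
  have "dist_set d c B \<le> d c g" using dist_set_le[OF assms(3)] g assms(4) by auto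
  also have "\<dots> \<le> cost d C A" using g dist_set_le_cost[OF assms(1) c(1), of d A] by simp
  finally show ?thesis using c by simp
qed

lemma cost_nonneg:
  assumes "finite_metric d C" "F \<subseteq> C" "F \<noteq> {}"
  shows "0 \<le> cost d C F"
proof -
  obtain c where c: "c \<in> C" "cost d C F = dist_set d c F"
    using cost_attained[OF finite_metric_finite[OF assms(1)], of d F] assms(2,3) by blast
  obtain g where g: "g \<in> F" "dist_set d c F = d c g"
    using dist_set_attained[OF finite_subset[OF assms(2) finite_metric_finite[OF assms(1)]] assms(3)]
    by blast
  show ?thesis using finite_metric_nonneg[OF assms(1) c(1), of g] assms(2) c(2) g by auto
qed

lemma OPT_nonneg:
  assumes "finite_metric d C" "optimal_solution d C k Fs"
  shows "0 \<le> OPT d C k"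
proof -
  have "Fs \<subseteq> C" "Fs \<noteq> {}" "cost d C Fs = OPT d C k"
    using assms(2) unfolding optimal_solution_def by auto
  then show ?thesis using cost_nonneg[OF assms(1)] by metis
qed

lemma exists_far_point:
  assumes "finite C" "C \<noteq> {}" "finite A" "r < cost d C A"
  shows "\<exists>c\<in>C. \<forall>h\<in>A. r < d c h"
proof -
  obtain c where c: "c \<in> C" "cost d C A = dist_set d c A" using cost_attained[OF assms(1,2)] by blast
  have "r < d c h" if "h \<in> A" for h using dist_set_le[OF assms(3) that, of d c] assms(4) c(2) by linarith
  then show ?thesis using c(1) by blast
qed

lemma exists_near_point:
  assumes "finite C" "c \<in> C" "finite A" "A \<noteq> {}" "cost d C A \<le> r"
  shows "\<exists>g\<in>A. d c g \<le> r"
proof -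
  obtain g where "g \<in> A" "dist_set d c A = d c g" using dist_set_attained[OF assms(3,4)] by blast
  then show ?thesis using dist_set_le_cost[OF assms(1,2), of d A] assms(5) by force
qed

lemma reverse_greedy_step:
  assumes "reverse_greedy d C k F" "Suc i \<le> card C - k"
  shows "\<exists>f\<in>F i. F (Suc i) = F i - {f} \<and>
           (\<forall>g\<in>F i. cost d C (F i - {f}) \<le> cost d C (F i - {g}))"
proof -
  have "Suc i \<in> {1..card C - k}" using assms(2) by simp
  with assms(1) have "\<exists>f\<in>F (Suc i - 1). F (Suc i) = F (Suc i - 1) - {f} \<and>
      (\<forall>g\<in>F (Suc i - 1). cost d C (F (Suc i - 1) - {f}) \<le> cost d C (F (Suc i - 1) - {g}))"
    unfolding reverse_greedy_def by (elim conjE bspec)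
  then show ?thesis by simp
qed

lemma reverse_greedy_antimono:
  assumes "reverse_greedy d C k F" "i \<le> j" "j \<le> card C - k"
  shows "F j \<subseteq> F i"
  using assms(2,3)
proof (induction j rule: dec_induct)
  case base
  then show ?case by simp
next
  case (step n)
  then obtain f where "F (Suc n) = F n - {f}" using reverse_greedy_step[OF assms(1), of n] by auto
  then show ?case using step by auto
qed

lemma reverse_greedy_subset:
  assumes "reverse_greedy d C k F" "j \<le> card C - k"
  shows "F j \<subseteq> C"
  using reverse_greedy_antimono[OF assms(1) _ assms(2), of 0] assms(1)
  unfolding reverse_greedy_def by auto

lemma reverse_greedy_cost_Suc_le:
  assumes "reverse_greedy d C k F" "Suc j \<le> card C - k" "g \<in> F j"
  shows "cost d C (F (Suc j)) \<le> cost d C (F j - {g})"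
  using reverse_greedy_step[OF assms(1,2)] assms(3) by auto

lemma critical_index_mono:
  assumes "finite_metric d C" "optimal_solution d C k Fs" "reverse_greedy d C k F"
    and "F (card C - k) \<noteq> {}"
    and "critical d C k F l i" "critical d C k F l' j" "l \<le> l'"
  shows "i \<le> j"
proof (rule ccontr)
  assume "\<not> i \<le> j"
  have i: "i < card C - k" "cost d C (F i) \<le> 2 * real l * OPT d C k"
    and j: "cost d C (F (Suc j)) > 2 * real l' * OPT d C k"
    using assms(5,6) unfolding critical_def by auto
  have "F i \<subseteq> F (Suc j)"
    using reverse_greedy_antimono[OF assms(3)] \<open>\<not> i \<le> j\<close> i(1) by simp
  moreover have "F i \<noteq> {}"
    using reverse_greedy_antimono[OF assms(3), of i "card C - k"] assms(4) i(1) by auto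
  moreover have "finite C" "F (Suc j) \<subseteq> C"
    using finite_metric_finite[OF assms(1)] reverse_greedy_subset[OF assms(3)] \<open>\<not> i \<le> j\<close> i(1)
    by auto
  ultimately have "cost d C (F (Suc j)) \<le> cost d C (F i)"
    by (intro cost_antimono) (auto intro: finite_subset)
  moreover have "real l * OPT d C k \<le> real l' * OPT d C k"
    using OPT_nonneg[OF assms(1,2)] assms(7) by (simp add: mult_right_mono)
  ultimately show False using i(2) j by linarith
qed

lemma critical_far_point:
  assumes "finite_metric d C" "reverse_greedy d C k F" "critical d C k F l j" "f \<in> F j"
  shows "\<exists>c\<in>C. \<forall>h\<in>F j - {f}. 2 * real l * OPT d C k < d c h"
proof -
  have j: "Suc j \<le> card C - k" "2 * real l * OPT d C k < cost d C (F (Suc j))"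
    using assms(3) unfolding critical_def by auto
  have fin: "finite C" using finite_metric_finite[OF assms(1)] .
  have "F j \<subseteq> C" using reverse_greedy_subset[OF assms(2)] j(1) by simp
  then have "C \<noteq> {}" "finite (F j - {f})" using assms(4) finite_subset[OF _ fin] by auto
  moreover have "2 * real l * OPT d C k < cost d C (F j - {f})"
    using reverse_greedy_cost_Suc_le[OF assms(2) j(1) assms(4)] j(2) by linarith
  ultimately show ?thesis using exists_far_point[OF fin] by blast
qed

lemma critical_near_point:
  assumes "finite_metric d C" "reverse_greedy d C k F" "critical d C k F l i" "F i \<noteq> {}" "c \<in> C"
  shows "\<exists>g\<in>F i. d c g \<le> 2 * real l * OPT d C k"
proof -
  have "F i \<subseteq> C" "cost d C (F i) \<le> 2 * real l * OPT d C k"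
    using assms(3) reverse_greedy_subset[OF assms(2)] unfolding critical_def by auto
  then show ?thesis
    using exists_near_point[OF finite_metric_finite[OF assms(1)] assms(5) _ assms(4)]
      finite_subset finite_metric_finite[OF assms(1)] by blast
qed

lemma consolidationD:
  assumes "consolidation d C k Fs F \<Phi>"
  shows "finite \<Phi>" and "P \<in> \<Phi> \<Longrightarrow> P \<subseteq> C" and "x \<in> F \<Longrightarrow> \<exists>P\<in>\<Phi>. x \<in> P"
    and "P \<in> \<Phi> \<Longrightarrow> x \<in> P \<Longrightarrow> y \<in> P \<Longrightarrow> d x y \<le> 2 * OPT d C k"
    and "oc \<in> Fs \<Longrightarrow> x \<in> F \<inter> opt_ball d C k oc \<Longrightarrow> y \<in> F \<inter> opt_ball d C k oc \<Longrightarrow>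
      \<exists>P\<in>\<Phi>. x \<in> P \<and> y \<in> P"
  using assms unfolding consolidation_def by (simp_all add: subset_iff)

lemma consolidationI:
  assumes "finite \<Phi>" "\<And>P. P \<in> \<Phi> \<Longrightarrow> P \<subseteq> C" "\<And>x. x \<in> F \<Longrightarrow> \<exists>P\<in>\<Phi>. x \<in> P"
    and "\<And>P x y. P \<in> \<Phi> \<Longrightarrow> x \<in> P \<Longrightarrow> y \<in> P \<Longrightarrow> d x y \<le> 2 * OPT d C k"
    and "\<And>oc x y. oc \<in> Fs \<Longrightarrow> x \<in> F \<inter> opt_ball d C k oc \<Longrightarrow> y \<in> F \<inter> opt_ball d C k oc \<Longrightarrow>
      \<exists>P\<in>\<Phi>. x \<in> P \<and> y \<in> P"
  shows "consolidation d C k Fs F \<Phi>"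
  unfolding consolidation_def using assms by (simp add: subset_iff)

lemma opt_ball_diameter:
  assumes "finite_metric d C" "oc \<in> C" "x \<in> opt_ball d C k oc" "y \<in> opt_ball d C k oc"
  shows "d x y \<le> 2 * OPT d C k"
proof -
  have "x \<in> C" "y \<in> C" "d oc x \<le> OPT d C k" "d oc y \<le> OPT d C k"
    using assms(3,4) unfolding opt_ball_def by auto
  moreover have "d x y \<le> d x oc + d oc y" "d x oc = d oc x"
    using finite_metric_triangle[OF assms(1)] finite_metric_sym[OF assms(1)] calculation(1,2) assms(2)
    by blast+
  ultimately show ?thesis by linarith
qed

lemma opt_ball_consolidation:
  assumes "finite_metric d C" "optimal_solution d C k Fs" "F \<subseteq> C"
  shows "consolidation d C k Fs F (opt_ball d C k ` Fs)"
proof (rule consolidationI)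
  have fin: "finite C" using finite_metric_finite[OF assms(1)] .
  have Fs: "Fs \<subseteq> C" "Fs \<noteq> {}" "cost d C Fs = OPT d C k"
    using assms(2) unfolding optimal_solution_def by auto
  then show fin_Fs: "finite (opt_ball d C k ` Fs)" using fin finite_subset by blast
  show "P \<subseteq> C" if "P \<in> opt_ball d C k ` Fs" for P using that unfolding opt_ball_def by auto
  show "\<exists>P\<in>opt_ball d C k ` Fs. x \<in> P" if "x \<in> F" for x
  proof -
    have x: "x \<in> C" using assms(3) that by auto
    obtain g where g: "g \<in> Fs" "dist_set d x Fs = d x g"
      using dist_set_attained[OF finite_subset[OF Fs(1) fin] Fs(2)] by blast
    have "d x g \<le> OPT d C k" using dist_set_le_cost[OF fin x, of d Fs] g Fs(3) by simp
    moreover have "d g x = d x g" using finite_metric_sym[OF assms(1) x] g Fs(1) by auto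
    ultimately have "x \<in> opt_ball d C k g" using x unfolding opt_ball_def by simp
    then show ?thesis using g(1) by blast
  qed
  show "d x y \<le> 2 * OPT d C k" if "P \<in> opt_ball d C k ` Fs" "x \<in> P" "y \<in> P" for P x y
    using opt_ball_diameter[OF assms(1)] Fs(1) that by blast
qed blast

lemma consolidation_number_le:
  assumes "consolidation d C k Fs F \<Phi>"
  shows "consolidation_number d C k Fs F \<le> card \<Phi>"
  unfolding consolidation_number_def using assms by (intro Least_le) auto

lemma consolidation_number_attained:
  assumes "finite_metric d C" "optimal_solution d C k Fs" "F \<subseteq> C"
  obtains \<Phi> where "consolidation d C k Fs F \<Phi>" "card \<Phi> = consolidation_number d C k Fs F"
proof -
  have "\<exists>m \<Phi>. consolidation d C k Fs F \<Phi> \<and> card \<Phi> = m"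
    using opt_ball_consolidation[OF assms] by blast
  from LeastI_ex[OF this] show ?thesis
    using that unfolding consolidation_number_def by blast
qed

lemma consolidation_dist_le:
  assumes "finite_metric d C" "consolidation d C k Fs F \<Phi>"
    and "P \<in> \<Phi>" "g \<in> P" "h \<in> P" "c \<in> C"
  shows "d c h \<le> d c g + 2 * OPT d C k"
proof -
  have "g \<in> C" "h \<in> C" "d g h \<le> 2 * OPT d C k"
    using consolidationD(2,4)[OF assms(2,3)] assms(4,5) by auto
  moreover have "d c h \<le> d c g + d g h"
    using finite_metric_triangle[OF assms(1,6)] \<open>g \<in> C\<close> \<open>h \<in> C\<close> by blast
  ultimately show ?thesis by linarith
qed

lemma consolidation_Diff_block:
  assumes "consolidation d C k Fs F \<Phi>" "F' \<subseteq> F"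
    and "P \<in> \<Phi>" "Q \<in> \<Phi>" "Q \<noteq> P" "P \<inter> F' \<subseteq> Q"
  shows "consolidation d C k Fs F' (\<Phi> - {P})"
proof -
  have block: "\<exists>P'\<in>\<Phi> - {P}. A \<subseteq> P'" if "A \<subseteq> F'" "P' \<in> \<Phi>" "A \<subseteq> P'" for A P'
    using that assms(3-6) by (cases "P' = P") blast+
  show ?thesis
  proof (rule consolidationI)
    fix x assume "x \<in> F'"
    then obtain P' where "P' \<in> \<Phi>" "x \<in> P'"
      using consolidationD(3)[OF assms(1)] assms(2) by blast
    then show "\<exists>P'\<in>\<Phi> - {P}. x \<in> P'" using block[of "{x}" P'] \<open>x \<in> F'\<close> by auto
  next
    fix oc x y
    assume oc: "oc \<in> Fs" "x \<in> F' \<inter> opt_ball d C k oc" "y \<in> F' \<inter> opt_ball d C k oc"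
    then obtain P' where "P' \<in> \<Phi>" "x \<in> P'" "y \<in> P'"
      using consolidationD(5)[OF assms(1) oc(1)] assms(2) by blast
    then show "\<exists>P'\<in>\<Phi> - {P}. x \<in> P' \<and> y \<in> P'" using block[of "{x, y}" P'] oc by auto
  qed (use consolidationD(1,2,4)[OF assms(1)] in auto)
qed

lemma consolidation_number_less:
  assumes "finite_metric d C" "consolidation d C k Fs F \<Phi>" "F' \<subseteq> F"
    and "oc \<in> Fs" "f1 \<in> F' \<inter> opt_ball d C k oc" "f2 \<in> F' \<inter> opt_ball d C k oc" "f1 \<noteq> f2"
    and "c \<in> C" "g \<in> F" "\<forall>h\<in>F' - {f1}. d c g + 2 * OPT d C k < d c h"
  shows "consolidation_number d C k Fs F' < card \<Phi>"
proof -
  obtain P Q where PQ: "P \<in> \<Phi>" "g \<in> P" "Q \<in> \<Phi>" "f1 \<in> Q" "f2 \<in> Q"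
    using consolidationD(3)[OF assms(2,9)] consolidationD(5)[OF assms(2,4)] assms(3,5,6) by blast
  have "P \<inter> F' \<subseteq> {f1}"
    using consolidation_dist_le[OF assms(1,2) PQ(1,2) _ assms(8)] assms(10) by force
  moreover have "Q \<noteq> P" using calculation PQ(5) assms(6,7) by blast
  ultimately have "consolidation d C k Fs F' (\<Phi> - {P})"
    using consolidation_Diff_block[OF assms(2,3) PQ(1,3)] PQ(4) by blast
  then show ?thesis
    using consolidation_number_le card_Diff1_less[OF consolidationD(1)[OF assms(2)] PQ(1)]
    by (metis order_le_less_trans)
qed

theorem lemma1:
  fixes d :: "'a \<Rightarrow> 'a \<Rightarrow> real" and C :: "'a set" and k :: nat
    and Fs :: "'a set" and F :: "nat \<Rightarrow> 'a set"
  assumes "finite_metric d C"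
    and "1 \<le> k" and "k \<le> card C"
    and "optimal_solution d C k Fs"
    and "reverse_greedy d C k F"
    and "\<exists>oc\<in>Fs. card (opt_ball d C k oc \<inter> F (card C - k)) \<ge> 2"
  shows "\<forall>l i j. critical d C k F l i \<and> critical d C k F (Suc l) j \<longrightarrow>
           consolidation_number d C k Fs (F j) < consolidation_number d C k Fs (F i)"
proof (intro allI impI)
  fix l i j
  assume "critical d C k F l i \<and> critical d C k F (Suc l) j"
  then have crit_i: "critical d C k F l i" and crit_j: "critical d C k F (Suc l) j" by auto
  obtain ot f1 f2 where ot: "ot \<in> Fs" and "f1 \<noteq> f2"
    and f12: "f1 \<in> opt_ball d C k ot \<inter> F (card C - k)" "f2 \<in> opt_ball d C k ot \<inter> F (card C - k)"
    using assms(6) by (auto simp: numeral_2_eq_2 card_le_Suc_iff)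
  have "i \<le> j" using critical_index_mono[OF assms(1,4,5) _ crit_i crit_j] f12 by auto
  moreover have "j < card C - k" "i < card C - k" using crit_i crit_j unfolding critical_def by auto
  ultimately have Fj: "F (card C - k) \<subseteq> F j" "F j \<subseteq> F i" "F i \<subseteq> C"
    using reverse_greedy_antimono[OF assms(5)] reverse_greedy_subset[OF assms(5)] by auto
  obtain c where c: "c \<in> C" "\<forall>h\<in>F j - {f1}. 2 * real (Suc l) * OPT d C k < d c h"
    using critical_far_point[OF assms(1,5) crit_j] Fj(1) f12 by blast
  obtain g where g: "g \<in> F i" "d c g \<le> 2 * real l * OPT d C k"
    using critical_near_point[OF assms(1,5) crit_i _ c(1)] Fj f12 by blast
  obtain \<Phi> where \<Phi>: "consolidation d C k Fs (F i) \<Phi>"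
    "card \<Phi> = consolidation_number d C k Fs (F i)"
    using consolidation_number_attained[OF assms(1,4) Fj(3)] .
  have "d c g + 2 * OPT d C k \<le> 2 * real (Suc l) * OPT d C k"
    using g(2) by (simp add: algebra_simps)
  then have "\<forall>h\<in>F j - {f1}. d c g + 2 * OPT d C k < d c h"
    using c(2) by force
  then show "consolidation_number d C k Fs (F j) < consolidation_number d C k Fs (F i)"
    using consolidation_number_less[OF assms(1) \<Phi>(1) Fj(2) ot _ _ \<open>f1 \<noteq> f2\<close> c(1) g(1)] f12 Fj(1) \<Phi>(2)
    by auto
qed

end
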